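(* Let $n\ge 3$ and let $A$ be a real nonsingular tridiagonal $n\times n$ matrix with diagonal entries $A_{i,i}=b_i$, subdiagonal entries $A_{i+1,i}=a_i$ and superdiagonal entries $A_{i,i+1}=c_i$. Suppose $A$ is diagonally dominant by rows: $$|b_1|\ge |c_1|,\qquad |b_i|\ge |a_{i-1}|+|c_i|\ (i=2,\dots,n-1),\qquad |b_n|\ge |a_{n-1}|,$$ with strict inequality in at least one of these inequalities. Then for every integer $k$ with $1<k<n$, the solutions $\mathbf Z^L_k$ of $B^L_k\mathbf Z^L_k=\mathbf e^L$ and $\mathbf Z^R_k$ of $B^R_k\mathbf Z^R_k=\mathbf e^R$ satisfy $\max_m|(\mathbf Z^L_k)_m|\le 1$ and $\max_m|(\mathbf Z^R_k)_m|\le 1$.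
   Context: For $1\le k\le n$: $B^L_k$ is the $k\times k$ matrix whose rows $1,\dots,k-1$ are rows $1,\dots,k-1$ of $A$ restricted to columns $1,\dots,k$, and whose last row is $(0,\dots,0,1)$; $\mathbf e^L=(0,\dots,0,1)^{\mathrm T}\in\mathbb R^k$. $B^R_k$ is the $(n-k+1)\times(n-k+1)$ matrix with rows and columns indexed by $k,\dots,n$, whose row $k$ is $(1,0,\dots,0)$ and whose row $m$ ($m=k+1,\dots,n$) is row $m$ of $A$ restricted to columns $k,\dots,n$; $\mathbf e^R=(1,0,\dots,0)^{\mathrm T}\in\mathbb R^{n-k+1}$. The paper calls its dichotomy algorithm "stable" exactly when these bounds hold for the vectors it uses. *)

theory Defs
  imports "Jordan_Normal_Form.Determinant"
begin

text \<open>Matrices are 0-indexed: the paper's entry (i,j) (1-based) is A $$ (i-1, j-1).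
  The paper's index k (1-based, 1 < k < n) is kept 1-based.\<close>

definition tridiagonal :: "nat \<Rightarrow> real mat \<Rightarrow> bool" where
  "tridiagonal n A \<longleftrightarrow> (\<forall>i<n. \<forall>j<n. (j + 1 < i \<or> i + 1 < j) \<longrightarrow> A $$ (i, j) = 0)"

definition dd_lhs :: "real mat \<Rightarrow> nat \<Rightarrow> real" where
  "dd_lhs A i = \<bar>A $$ (i, i)\<bar>"

definition dd_rhs :: "nat \<Rightarrow> real mat \<Rightarrow> nat \<Rightarrow> real" where
  "dd_rhs n A i = (if 0 < i then \<bar>A $$ (i, i - 1)\<bar> else 0)
                 + (if i + 1 < n then \<bar>A $$ (i, i + 1)\<bar> else 0)"

definition row_diag_dominant :: "nat \<Rightarrow> real mat \<Rightarrow> bool" where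
  "row_diag_dominant n A \<longleftrightarrow>
     (\<forall>i<n. dd_lhs A i \<ge> dd_rhs n A i) \<and> (\<exists>i<n. dd_lhs A i > dd_rhs n A i)"

definition BL :: "real mat \<Rightarrow> nat \<Rightarrow> real mat" where
  "BL A k = mat k k (\<lambda>(i, j). if i + 1 < k then A $$ (i, j) else (if j + 1 = k then 1 else 0))"

definition eL :: "nat \<Rightarrow> real vec" where
  "eL k = unit_vec k (k - 1)"

text \<open>B^R_k ((n-k+1) x (n-k+1)), indices k..n: first row (1,0,...,0),
  row m = row m of A on columns k..n for m = k+1..n.\<close>
definition BR :: "nat \<Rightarrow> real mat \<Rightarrow> nat \<Rightarrow> real mat" where
  "BR n A k = mat (n - k + 1) (n - k + 1)
     (\<lambda>(i, j). if i = 0 then (if j = 0 then 1 else 0) else A $$ (k - 1 + i, k - 1 + j))"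

definition eR :: "nat \<Rightarrow> nat \<Rightarrow> real vec" where
  "eR n k = unit_vec (n - k + 1) 0"

end

theory Submission
  imports Defs
begin

(* Let Z solve B^L_k Z = e^L and suppose max |Z_m| > 1; since the last entry of Z is 1, the
   maximum is attained at a last index p that is not the final one. In row p of A, weak diagonal
   dominance together with |Z_(p+1)| < |Z_p| forces the superdiagonal entry A(p,p+1) to vanish.
   Then A is block lower triangular and (Z_0, ..., Z_p) lies in the kernel of its leading
   (p+1)-block, so det A = 0. The bound for B^R_k is the same statement for the matrix with rows
   and columns reversed. *)

lemma sum_three_term:
  fixes g :: "nat \<Rightarrow> 'a::comm_monoid_add"
  assumes "i < K" and "\<And>j. j < K \<Longrightarrow> j + 1 < i \<or> i + 1 < j \<Longrightarrow> g j = 0"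
  shows "(\<Sum>j<K. g j) = (if 0 < i then g (i - 1) else 0) + g i + (if i + 1 < K then g (i + 1) else 0)"
proof -
  let ?T = "{j. j < K \<and> i \<le> j + 1 \<and> j \<le> i + 1}"
  have "(\<Sum>j<K. g j) = (\<Sum>j\<in>?T. g j)"
    by (rule sum.mono_neutral_right) (use assms(2) in \<open>auto simp: not_le\<close>)
  also have "?T = (if 0 < i then {i - 1} else {}) \<union> {i} \<union> (if i + 1 < K then {i + 1} else {})"
    using assms(1) by (auto split: if_splits)
  also have "(\<Sum>j\<in>\<dots>. g j) = (if 0 < i then g (i - 1) else 0) + g i + (if i + 1 < K then g (i + 1) else 0)"
    by (cases "0 < i"; cases "i + 1 < K") (auto simp: add_ac)
  finally show ?thesis .
qed

lemma ex_last_maximizer: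
  fixes f :: "nat \<Rightarrow> 'a::linorder"
  assumes "0 < k"
  obtains p where "p < k" "\<And>j. j < k \<Longrightarrow> f j \<le> f p" "\<And>j. p < j \<Longrightarrow> j < k \<Longrightarrow> f j < f p"
  using assms
proof (induction k arbitrary: thesis)
  case 0
  then show ?case by simp
next
  case (Suc k)
  show ?case
  proof (cases k)
    case 0
    then show ?thesis using Suc.prems(1)[of 0] by simp
  next
    case (Suc k')
    then obtain p where p: "p < k" "\<And>j. j < k \<Longrightarrow> f j \<le> f p"
      "\<And>j. p < j \<Longrightarrow> j < k \<Longrightarrow> f j < f p"
      using Suc.IH by blast
    show ?thesis
    proof (cases "f p \<le> f k")
      case True
      then show ?thesis using p by (intro Suc.prems(1)[of k]) (auto simp: less_Suc_eq intro: order_trans)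
    next
      case False
      then show ?thesis using p by (intro Suc.prems(1)[of p]) (auto simp: less_Suc_eq)
    qed
  qed
qed

lemma dominant_row_coupling_eq_0:
  fixes a b c x y w :: real
  assumes row: "a * x + b * y + c * w = 0" and dom: "\<bar>a\<bar> + \<bar>c\<bar> \<le> \<bar>b\<bar>"
    and "\<bar>x\<bar> \<le> \<bar>y\<bar>" and "\<bar>w\<bar> < \<bar>y\<bar>"
  shows "c = 0"
proof (rule ccontr)
  assume "c \<noteq> 0"
  have "\<bar>b\<bar> * \<bar>y\<bar> = \<bar>a * x + c * w\<bar>"
    using row by (metis abs_minus_cancel abs_mult add.commute add.left_commute add_eq_0_iff2)
  also have "\<dots> \<le> \<bar>a\<bar> * \<bar>x\<bar> + \<bar>c\<bar> * \<bar>w\<bar>"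
    by (metis abs_mult abs_triangle_ineq)
  also have "\<dots> < \<bar>a\<bar> * \<bar>y\<bar> + \<bar>c\<bar> * \<bar>y\<bar>"
    using \<open>c \<noteq> 0\<close> assms(3,4) by (intro add_le_less_mono mult_left_mono mult_strict_left_mono) auto
  also have "\<dots> \<le> \<bar>b\<bar> * \<bar>y\<bar>"
    using mult_right_mono[OF dom, of "\<bar>y\<bar>"] by (simp add: algebra_simps)
  finally show False by simp
qed

lemma det_eq_0_if_leading_block_kernel:
  fixes A :: "'a::idom mat"
  assumes A: "A \<in> carrier_mat n n" and q: "q \<le> n"
    and upper_right: "\<And>i j. i < q \<Longrightarrow> q \<le> j \<Longrightarrow> j < n \<Longrightarrow> A $$ (i, j) = 0"
    and x: "x \<in> carrier_vec q" "x \<noteq> 0\<^sub>v q"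
    and kernel: "mat q q (\<lambda>(i, j). A $$ (i, j)) *\<^sub>v x = 0\<^sub>v q"
  shows "det A = 0"
proof -
  define A1 where "A1 = mat q q (\<lambda>(i, j). A $$ (i, j))"
  define A3 where "A3 = mat (n - q) q (\<lambda>(i, j). A $$ (i + q, j))"
  define A4 where "A4 = mat (n - q) (n - q) (\<lambda>(i, j). A $$ (i + q, j + q))"
  have "A = four_block_mat A1 (0\<^sub>m q (n - q)) A3 A4"
    by (rule eq_matI) (use A q upper_right in \<open>auto simp: A1_def A3_def A4_def\<close>)
  then have "det A = det A1 * det A4"
    using det_four_block_mat_upper_right_zero[of A1 q "0\<^sub>m q (n - q)" "n - q" A3 A4]
    by (simp add: A1_def A3_def A4_def)
  moreover have "det A1 = 0"
    using det_0_iff_vec_prod_zero[of A1 q] x kernel by (auto simp: A1_def)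
  ultimately show ?thesis by simp
qed

lemma tridiagonal_eq_0:
  assumes "tridiagonal n A" and "i < n" and "j < n" and "j + 1 < i \<or> i + 1 < j"
  shows "A $$ (i, j) = 0"
  using assms unfolding tridiagonal_def by blast

lemma BL_solution_last:
  assumes "BL A k *\<^sub>v Z = eL k" and "Z \<in> carrier_vec k" and "0 < k"
  shows "Z $ (k - 1) = 1"
proof -
  have "j + 1 = k \<longleftrightarrow> j = k - 1" for j
    using assms(3) by auto
  then have "(BL A k *\<^sub>v Z) $ (k - 1) = Z $ (k - 1)"
    using assms(2,3)
    by (simp add: BL_def scalar_prod_def atLeast0LessThan if_distrib[of "\<lambda>c. c * _"] cong: if_cong)
  then show ?thesis
    using assms by (simp add: eL_def)
qed

lemma BL_solution_row:
  assumes "BL A k *\<^sub>v Z = eL k" and "Z \<in> carrier_vec k" and "i + 1 < k"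
  shows "(\<Sum>j<k. A $$ (i, j) * Z $ j) = 0"
proof -
  have "(BL A k *\<^sub>v Z) $ i = (\<Sum>j<k. A $$ (i, j) * Z $ j)"
    using assms(2,3) by (simp add: BL_def scalar_prod_def atLeast0LessThan)
  moreover have "i \<noteq> k - 1"
    using assms(3) by simp
  ultimately show ?thesis
    using assms by (simp add: eL_def)
qed

lemma BL_solution_abs_le_1:
  fixes A :: "real mat"
  assumes A: "A \<in> carrier_mat n n" and det: "det A \<noteq> 0" and tri: "tridiagonal n A"
    and dom: "\<forall>i<n. dd_lhs A i \<ge> dd_rhs n A i" and k: "0 < k" "k \<le> n"
    and Z: "Z \<in> carrier_vec k" and solution: "BL A k *\<^sub>v Z = eL k" and m: "m < k"
  shows "\<bar>Z $ m\<bar> \<le> 1"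
proof (rule ccontr)
  assume "\<not> \<bar>Z $ m\<bar> \<le> 1"
  obtain p where p: "p < k" "\<And>j. j < k \<Longrightarrow> \<bar>Z $ j\<bar> \<le> \<bar>Z $ p\<bar>"
    "\<And>j. p < j \<Longrightarrow> j < k \<Longrightarrow> \<bar>Z $ j\<bar> < \<bar>Z $ p\<bar>"
    using ex_last_maximizer[of k "\<lambda>j. \<bar>Z $ j\<bar>"] k(1) by blast
  have max_gt_1: "1 < \<bar>Z $ p\<bar>"
    using p(2)[OF m] \<open>\<not> \<bar>Z $ m\<bar> \<le> 1\<close> by simp
  then have "p \<noteq> k - 1"
    using BL_solution_last[OF solution Z k(1)] by auto
  with p(1) have p_k: "p + 1 < k" by simp
  have coupling: "A $$ (p, p + 1) = 0"
  proof (rule dominant_row_coupling_eq_0)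
    show "(if 0 < p then A $$ (p, p - 1) else 0) * (if 0 < p then Z $ (p - 1) else 0)
        + A $$ (p, p) * Z $ p + A $$ (p, p + 1) * Z $ (p + 1) = 0"
      using BL_solution_row[OF solution Z p_k] sum_three_term[of p k "\<lambda>j. A $$ (p, j) * Z $ j"]
        p_k k tridiagonal_eq_0[OF tri] by auto
    show "\<bar>if 0 < p then A $$ (p, p - 1) else 0\<bar> + \<bar>A $$ (p, p + 1)\<bar> \<le> \<bar>A $$ (p, p)\<bar>"
      using dom[rule_format, of p] p_k k by (auto simp: dd_lhs_def dd_rhs_def)
    show "\<bar>if 0 < p then Z $ (p - 1) else 0\<bar> \<le> \<bar>Z $ p\<bar>"
      using p by auto
    show "\<bar>Z $ (p + 1)\<bar> < \<bar>Z $ p\<bar>"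
      using p p_k by auto
  qed
  have upper_right: "A $$ (i, j) = 0" if "i < p + 1" "p + 1 \<le> j" "j < n" for i j
    using coupling tridiagonal_eq_0[OF tri, of i j] that p_k k
    by (cases "i = p \<and> j = p + 1") auto
  have "det A = 0"
  proof (rule det_eq_0_if_leading_block_kernel[OF A _ upper_right])
    show "vec (p + 1) (($) Z) \<noteq> 0\<^sub>v (p + 1)"
      using max_gt_1 by (auto simp: vec_eq_iff)
    show "mat (p + 1) (p + 1) (\<lambda>(i, j). A $$ (i, j)) *\<^sub>v vec (p + 1) (($) Z) = 0\<^sub>v (p + 1)"
    proof (rule eq_vecI)
      fix i assume "i < dim_vec (0\<^sub>v (p + 1) :: real vec)"
      then have i: "i < p + 1" by simp
      have "(\<Sum>j<p + 1. A $$ (i, j) * Z $ j) = (\<Sum>j<k. A $$ (i, j) * Z $ j)"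
        by (rule sum.mono_neutral_left) (use i p_k k upper_right in auto)
      also have "\<dots> = 0"
        using BL_solution_row[OF solution Z] i p_k by simp
      finally show "(mat (p + 1) (p + 1) (\<lambda>(i, j). A $$ (i, j)) *\<^sub>v vec (p + 1) (($) Z)) $ i
          = 0\<^sub>v (p + 1) $ i"
        using i by (simp add: scalar_prod_def atLeast0LessThan)
    qed simp
  qed (use p_k k in simp_all)
  with det show False by simp
qed

definition reverse_vec :: "nat \<Rightarrow> 'a vec \<Rightarrow> 'a vec" where
  "reverse_vec n v = vec n (\<lambda>i. v $ (n - 1 - i))"

definition reverse_mat :: "nat \<Rightarrow> 'a mat \<Rightarrow> 'a mat" where
  "reverse_mat n A = mat n n (\<lambda>(i, j). A $$ (n - 1 - i, n - 1 - j))"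

lemma reverse_vec_carrier [simp]: "reverse_vec n v \<in> carrier_vec n"
  by (simp add: reverse_vec_def)

lemma reverse_mat_carrier [simp]: "reverse_mat n A \<in> carrier_mat n n"
  by (simp add: reverse_mat_def)

lemma reverse_vec_zero [simp]: "reverse_vec n (0\<^sub>v n) = 0\<^sub>v n"
  by (auto simp: reverse_vec_def)

lemma reverse_vec_reverse_vec: "v \<in> carrier_vec n \<Longrightarrow> reverse_vec n (reverse_vec n v) = v"
  by (auto simp: reverse_vec_def)

lemma reverse_vec_eq_iff:
  "v \<in> carrier_vec n \<Longrightarrow> w \<in> carrier_vec n \<Longrightarrow> reverse_vec n v = reverse_vec n w \<longleftrightarrow> v = w"
  by (metis reverse_vec_reverse_vec)

lemma reverse_mat_reverse_mat: "A \<in> carrier_mat n n \<Longrightarrow> reverse_mat n (reverse_mat n A) = A"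
  by (auto simp: reverse_mat_def)

lemma reverse_mat_mult_reverse_vec:
  assumes "A \<in> carrier_mat n n" and "v \<in> carrier_vec n"
  shows "reverse_mat n A *\<^sub>v reverse_vec n v = reverse_vec n (A *\<^sub>v v)"
proof (rule eq_vecI)
  fix i assume "i < dim_vec (reverse_vec n (A *\<^sub>v v))"
  then have i: "i < n" by (simp add: reverse_vec_def)
  have "(\<Sum>j<n. A $$ (n - 1 - i, n - 1 - j) * v $ (n - 1 - j)) = (\<Sum>j<n. A $$ (n - 1 - i, j) * v $ j)"
    using sum.atLeastLessThan_rev[of "\<lambda>j. A $$ (n - 1 - i, j) * v $ j" 0 n]
    by (simp add: atLeast0LessThan)
  then show "(reverse_mat n A *\<^sub>v reverse_vec n v) $ i = reverse_vec n (A *\<^sub>v v) $ i"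
    using i assms by (simp add: reverse_mat_def reverse_vec_def scalar_prod_def atLeast0LessThan)
qed (simp add: reverse_mat_def reverse_vec_def)

lemma det_eq_0_if_det_reverse_mat_eq_0:
  fixes A :: "'a::idom mat"
  assumes A: "A \<in> carrier_mat n n" and "det (reverse_mat n A) = 0"
  shows "det A = 0"
proof -
  obtain v where v: "v \<in> carrier_vec n" "v \<noteq> 0\<^sub>v n" "reverse_mat n A *\<^sub>v v = 0\<^sub>v n"
    using det_0_iff_vec_prod_zero[OF reverse_mat_carrier] assms(2) by blast
  have "A *\<^sub>v reverse_vec n v = reverse_vec n (reverse_mat n A *\<^sub>v v)"
    using reverse_mat_mult_reverse_vec[OF reverse_mat_carrier[of n A] v(1)] reverse_mat_reverse_mat[OF A] by simp
  also have "\<dots> = 0\<^sub>v n"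
    using v(3) by simp
  finally have "A *\<^sub>v reverse_vec n v = 0\<^sub>v n" .
  moreover have "reverse_vec n v \<noteq> 0\<^sub>v n"
    using v(2) reverse_vec_reverse_vec[OF v(1)] by force
  ultimately show ?thesis
    using det_0_iff_vec_prod_zero[OF A] reverse_vec_carrier by blast
qed

lemma tridiagonal_reverse_mat: "tridiagonal n A \<Longrightarrow> tridiagonal n (reverse_mat n A)"
  unfolding tridiagonal_def reverse_mat_def by auto

lemma dd_lhs_reverse_mat: "i < n \<Longrightarrow> dd_lhs (reverse_mat n A) i = dd_lhs A (n - 1 - i)"
  by (simp add: dd_lhs_def reverse_mat_def)

lemma dd_rhs_reverse_mat: "i < n \<Longrightarrow> dd_rhs n (reverse_mat n A) i = dd_rhs n A (n - 1 - i)"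
  by (auto simp: dd_rhs_def reverse_mat_def Suc_diff_Suc)

lemma BR_eq_reverse_mat_BL:
  assumes "0 < k" and "k \<le> n"
  shows "BR n A k = reverse_mat (n - k + 1) (BL (reverse_mat n A) (n - k + 1))"
  by (rule eq_matI) (use assms in \<open>auto simp: BR_def BL_def reverse_mat_def\<close>)

lemma eR_eq_reverse_vec_eL: "eR n k = reverse_vec (n - k + 1) (eL (n - k + 1))"
  by (rule eq_vecI) (auto simp: eR_def eL_def reverse_vec_def)

lemma BR_solution_abs_le_1:
  fixes A :: "real mat"
  assumes A: "A \<in> carrier_mat n n" and det: "det A \<noteq> 0" and tri: "tridiagonal n A"
    and dom: "\<forall>i<n. dd_lhs A i \<ge> dd_rhs n A i" and k: "0 < k" "k \<le> n"
    and Z: "Z \<in> carrier_vec (n - k + 1)" and solution: "BR n A k *\<^sub>v Z = eR n k"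
    and m: "m < n - k + 1"
  shows "\<bar>Z $ m\<bar> \<le> 1"
proof -
  define N where "N = n - k + 1"
  define A' where "A' = reverse_mat n A"
  define Z' where "Z' = reverse_vec N Z"
  have BL_carrier: "BL A' N \<in> carrier_mat N N"
    by (simp add: BL_def)
  have "reverse_vec N (BL A' N *\<^sub>v Z') = BR n A k *\<^sub>v Z"
    using reverse_mat_mult_reverse_vec[OF BL_carrier, of Z'] reverse_vec_reverse_vec[OF Z] k
    by (simp add: Z'_def A'_def N_def BR_eq_reverse_mat_BL)
  also have "\<dots> = reverse_vec N (eL N)"
    by (simp add: solution eR_eq_reverse_vec_eL N_def)
  finally have "BL A' N *\<^sub>v Z' = eL N"
    by (subst (asm) reverse_vec_eq_iff)
      (use BL_carrier in \<open>auto simp: eL_def carrier_matD intro!: carrier_vecI\<close>)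
  moreover have "\<forall>i<n. dd_lhs A' i \<ge> dd_rhs n A' i"
    using dom by (simp add: A'_def dd_lhs_reverse_mat dd_rhs_reverse_mat)
  moreover have "det A' \<noteq> 0"
    using det det_eq_0_if_det_reverse_mat_eq_0[OF A] by (auto simp: A'_def)
  ultimately have "\<bar>Z' $ (N - 1 - m)\<bar> \<le> 1"
    using BL_solution_abs_le_1[of A' n N Z' "N - 1 - m"] tridiagonal_reverse_mat[OF tri] k m
    by (auto simp: A'_def N_def Z'_def)
  then show ?thesis
    using k m by (simp add: Z'_def reverse_vec_def N_def)
qed

theorem theorem4:
  fixes n :: nat and A :: "real mat"
  assumes "n \<ge> 3"
    and "A \<in> carrier_mat n n"
    and "det A \<noteq> 0"
    and "tridiagonal n A"
    and "row_diag_dominant n A"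
  shows "\<forall>k. 1 < k \<and> k < n \<longrightarrow>
           (\<forall>ZL \<in> carrier_vec k. BL A k *\<^sub>v ZL = eL k \<longrightarrow> (\<forall>m<k. \<bar>ZL $ m\<bar> \<le> 1)) \<and>
           (\<forall>ZR \<in> carrier_vec (n - k + 1). BR n A k *\<^sub>v ZR = eR n k \<longrightarrow>
              (\<forall>m<n - k + 1. \<bar>ZR $ m\<bar> \<le> 1))"
proof -
  have dom: "\<forall>i<n. dd_lhs A i \<ge> dd_rhs n A i"
    using assms(5) unfolding row_diag_dominant_def by blast
  show ?thesis
  proof (intro allI impI conjI)
    fix k assume "1 < k \<and> k < n"
    then have k: "0 < k" "k \<le> n" by auto
    show "\<forall>ZL \<in> carrier_vec k. BL A k *\<^sub>v ZL = eL k \<longrightarrow> (\<forall>m<k. \<bar>ZL $ m\<bar> \<le> 1)"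
      using BL_solution_abs_le_1[OF assms(2,3,4) dom k] by blast
    show "\<forall>ZR \<in> carrier_vec (n - k + 1). BR n A k *\<^sub>v ZR = eR n k \<longrightarrow>
        (\<forall>m<n - k + 1. \<bar>ZR $ m\<bar> \<le> 1)"
      using BR_solution_abs_le_1[OF assms(2,3,4) dom k] by blast
  qed
qed

end
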